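(* Let $n\geq2$ and let $\mathcal{C}\to\mathbb{P}^{n-1}$ be a genus one normal curve of degree $n$ over $\mathbb{C}$ (a double cover of $\mathbb{P}^1$ if $n=2$) with Jacobian $E$. For each $T\in E[n](\mathbb{C})$ let $M_T\in GL_n(\mathbb{C})$ be any matrix describing the action of $T$ on $\mathcal{C}\to\mathbb{P}^{n-1}$. Then, up to a positive real scalar, the reduction covariant of $\mathcal{C}$ is $$\varphi_{\mathbb{C}}(\mathcal{C})=\sum_{T\in E[n](\mathbb{C})}\frac{1}{|\det M_T|^{2/n}}\,\overline{M}_T^{\,t}M_T.$$
   Context: $E[n]$ acts on $\mathcal{C}$ by translation (as $\mathcal{C}$ is a torsor under $E$), and this action extends to an action on $\mathbb{P}^{n-1}$ by projective linear transformations, giving a homomorphism $\chi:E[n](\mathbb{C})\to PGL_n(\mathbb{C})$; $M_T$ is any lift of $\chi(T)$ to $GL_n(\mathbb{C})$. The Heisenberg group $H_n$ is the preimage of $\chi(E[n](\mathbb{C}))$ in $SL_n(\mathbb{C})$. The reduction covariant $\varphi_{\mathbb{C}}(\mathcal{C})$ is the positive definite Hermitian $n\times n$ matrix $M$, unique up to positive real scalars, such that $\bar h^{-t}Mh^{-1}=M$ for all $h\in H_n$ (the matrix of the $H_n$-invariant inner product). *)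

theory Defs
  imports "HOL-Algebra.Group" "Jordan_Normal_Form.Schur_Decomposition"
begin

definition proj_eq :: "complex mat \<Rightarrow> complex mat \<Rightarrow> bool" where
  "proj_eq A B \<longleftrightarrow> (\<exists>c::complex. c \<noteq> 0 \<and> A = c \<cdot>\<^sub>m B)"

definition GL :: "nat \<Rightarrow> complex mat set" where
  "GL n = {A. A \<in> carrier_mat n n \<and> det A \<noteq> 0}"

definition SL :: "nat \<Rightarrow> complex mat set" where
  "SL n = {A. A \<in> carrier_mat n n \<and> det A = 1}"

text \<open>M : G -> GL_n is a family of lifts of a homomorphism chi : G -> PGL_n.\<close>
definition proj_lift_of_hom :: "('g, 'b) monoid_scheme \<Rightarrow> nat \<Rightarrow> ('g \<Rightarrow> complex mat) \<Rightarrow> bool" where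
  "proj_lift_of_hom G n M \<longleftrightarrow>
     (\<forall>T \<in> carrier G. M T \<in> GL n) \<and>
     (\<forall>T \<in> carrier G. \<forall>U \<in> carrier G. proj_eq (M (T \<otimes>\<^bsub>G\<^esub> U)) (M T * M U))"

definition heisenberg :: "('g, 'b) monoid_scheme \<Rightarrow> nat \<Rightarrow> ('g \<Rightarrow> complex mat) \<Rightarrow> complex mat set" where
  "heisenberg G n M = {h \<in> SL n. \<exists>T \<in> carrier G. proj_eq h (M T)}"

definition pos_def_hermitian :: "nat \<Rightarrow> complex mat \<Rightarrow> bool" where
  "pos_def_hermitian n A \<longleftrightarrow> A \<in> carrier_mat n n \<and> mat_adjoint A = A \<and>
     (\<forall>v \<in> carrier_vec n. v \<noteq> 0\<^sub>v n \<longrightarrow> Re (conjugate v \<bullet> (A *\<^sub>v v)) > 0)"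

definition invariant_under :: "nat \<Rightarrow> complex mat set \<Rightarrow> complex mat \<Rightarrow> bool" where
  "invariant_under n H A \<longleftrightarrow>
     (\<forall>h \<in> H. \<forall>g \<in> carrier_mat n n. h * g = 1\<^sub>m n \<longrightarrow> mat_adjoint g * A * g = A)"

definition is_reduction_covariant :: "('g, 'b) monoid_scheme \<Rightarrow> nat \<Rightarrow> ('g \<Rightarrow> complex mat) \<Rightarrow> complex mat \<Rightarrow> bool" where
  "is_reduction_covariant G n M A \<longleftrightarrow>
     pos_def_hermitian n A \<and> invariant_under n (heisenberg G n M) A"

definition mat_sum :: "nat \<Rightarrow> ('g \<Rightarrow> complex mat) \<Rightarrow> 'g set \<Rightarrow> complex mat" where
  "mat_sum n f S = mat n n (\<lambda>(i,j). \<Sum>T\<in>S. f T $$ (i,j))"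

end

theory Submission
  imports Defs
begin

text \<open>
  Put \<open>N(B) = |det B|^(-2/n) B\<^sup>* B\<close>. This matrix is positive definite Hermitian for
  invertible \<open>B\<close>, unchanged when \<open>B\<close> is multiplied by a nonzero scalar, and satisfies
  \<open>N(B h) = h\<^sup>* N(B) h\<close> whenever \<open>|det h| = 1\<close>. An element \<open>h\<close> of the Heisenberg group
  is a scalar multiple of some \<open>M\<^sub>U\<close>, and \<open>M\<^sub>T M\<^sub>U\<close> is a scalar multiple of \<open>M\<^sub>T\<^sub>U\<close>,
  so \<open>h\<^sup>* N(M\<^sub>T) h = N(M\<^sub>T\<^sub>U)\<close>: conjugation by \<open>h\<close> only permutes the terms of
  \<open>\<Sum>\<^sub>T N(M\<^sub>T)\<close>. This sum is therefore a positive definite Hermitian \<open>H\<^sub>n\<close>-invariant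
  matrix, and uniqueness of the reduction covariant up to positive scalars gives the claim.
\<close>

lemma dim_mat_adjoint[simp]:
  "dim_row (mat_adjoint A) = dim_col A" "dim_col (mat_adjoint A) = dim_row A"
  unfolding mat_adjoint_def by auto

lemma mat_adjoint_carrier[simp]: "A \<in> carrier_mat n m \<Longrightarrow> mat_adjoint A \<in> carrier_mat m n"
  unfolding carrier_mat_def by simp

lemma index_mat_adjoint[simp]:
  "i < dim_col A \<Longrightarrow> j < dim_row A \<Longrightarrow> mat_adjoint (A::complex mat) $$ (i,j) = cnj (A $$ (j,i))"
  unfolding mat_adjoint_def by (simp add: mat_of_rows_index)

lemma mat_adjoint_adjoint[simp]: "mat_adjoint (mat_adjoint (A::complex mat)) = A"
  by (rule eq_matI) auto

lemma mat_adjoint_mult: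
  assumes "A \<in> carrier_mat n m" "B \<in> carrier_mat m k"
  shows "mat_adjoint ((A::complex mat) * B) = mat_adjoint B * mat_adjoint A"
  using assms by (intro eq_matI) (auto simp: scalar_prod_def cnj_sum mult.commute)

lemma mat_adjoint_smult: "mat_adjoint (c \<cdot>\<^sub>m (A::complex mat)) = cnj c \<cdot>\<^sub>m mat_adjoint A"
  by (intro eq_matI) auto

lemma mat_adjoint_one[simp]: "mat_adjoint (1\<^sub>m n :: complex mat) = 1\<^sub>m n"
  by (intro eq_matI) auto

lemma mat_adjoint_scalar_prod:
  assumes "A \<in> carrier_mat n n" "v \<in> carrier_vec n" "w \<in> carrier_vec n"
  shows "conjugate v \<bullet> (mat_adjoint (A::complex mat) *\<^sub>v w) = conjugate (A *\<^sub>v v) \<bullet> w"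
proof -
  have "conjugate v \<bullet> (mat_adjoint A *\<^sub>v w) = (\<Sum>i<n. cnj (v$i) * (\<Sum>j<n. cnj (A$$(j,i)) * w$j))"
    using assms by (simp add: scalar_prod_def lessThan_atLeast0 row_def)
  also have "\<dots> = (\<Sum>j<n. cnj (\<Sum>i<n. A$$(j,i) * v$i) * w$j)"
    by (simp add: sum_distrib_left sum_distrib_right cnj_sum, subst sum.swap) (simp add: mult_ac)
  also have "\<dots> = conjugate (A *\<^sub>v v) \<bullet> w"
    using assms by (simp add: scalar_prod_def lessThan_atLeast0 row_def)
  finally show ?thesis .
qed

lemma smult_smult_mat: "a \<cdot>\<^sub>m (b \<cdot>\<^sub>m (A::complex mat)) = (a * b) \<cdot>\<^sub>m A"
  by (intro eq_matI) auto

lemma mult_smult_mat_sandwich: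
  assumes "A \<in> carrier_mat n n" "G \<in> carrier_mat n n" "C \<in> carrier_mat n n"
  shows "A * (k \<cdot>\<^sub>m G) * C = k \<cdot>\<^sub>m (A * G * (C::complex mat))"
  using assms by (simp add: mult_smult_distrib[of _ n n _ n] mult_smult_assoc_mat[of _ n n _ n]
      mult_carrier_mat[of _ n n _ n])

lemma smult_mult_mat_vec:
  "A \<in> carrier_mat n m \<Longrightarrow> v \<in> carrier_vec m \<Longrightarrow> (k \<cdot>\<^sub>m A) *\<^sub>v v = k \<cdot>\<^sub>v (A *\<^sub>v (v::complex vec))"
  by (intro eq_vecI) (auto simp: scalar_prod_def sum_distrib_left mult_ac)

lemma mat_adjoint_smult_gram:
  assumes "B \<in> carrier_mat n n"
  shows "mat_adjoint (c \<cdot>\<^sub>m B) * (c \<cdot>\<^sub>m (B::complex mat)) = complex_of_real (cmod c ^ 2) \<cdot>\<^sub>m (mat_adjoint B * B)"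
proof -
  have "mat_adjoint (c \<cdot>\<^sub>m B) * (c \<cdot>\<^sub>m B) = c \<cdot>\<^sub>m (cnj c \<cdot>\<^sub>m (mat_adjoint B * B))"
    using assms by (simp add: mat_adjoint_smult mult_smult_distrib[of _ n n] mult_smult_assoc_mat[of _ n n])
  moreover have "c * cnj c = complex_of_real (cmod c ^ 2)"
    by (metis complex_norm_square of_real_power)
  ultimately show ?thesis by (simp add: smult_smult_mat)
qed

lemma mat_sum_carrier[simp]: "mat_sum n f S \<in> carrier_mat n n"
  unfolding mat_sum_def by auto

lemma dim_mat_sum[simp]: "dim_row (mat_sum n f S) = n" "dim_col (mat_sum n f S) = n"
  unfolding mat_sum_def by auto

lemma index_mat_sum[simp]: "i < n \<Longrightarrow> j < n \<Longrightarrow> mat_sum n f S $$ (i,j) = (\<Sum>T\<in>S. f T $$ (i,j))"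
  unfolding mat_sum_def by auto

lemma mat_sum_cong: "(\<And>T. T \<in> S \<Longrightarrow> f T = g T) \<Longrightarrow> mat_sum n f S = mat_sum n g S"
  unfolding mat_sum_def by (intro eq_matI) auto

lemma mat_sum_reindex_bij_betw:
  assumes "bij_betw p S S"
  shows "mat_sum n (\<lambda>T. f (p T)) S = mat_sum n f S"
  using sum.reindex_bij_betw[OF assms] by (intro eq_matI) auto

lemma mult_mat_sum_left:
  assumes A: "A \<in> carrier_mat n n" and f: "\<And>T. T \<in> S \<Longrightarrow> f T \<in> carrier_mat n n"
  shows "A * mat_sum n f S = mat_sum n (\<lambda>T. A * f T) S"
proof (rule eq_matI)
  fix i j assume "i < dim_row (mat_sum n (\<lambda>T. A * f T) S)" "j < dim_col (mat_sum n (\<lambda>T. A * f T) S)"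
  then have i: "i < n" and j: "j < n" by auto
  have "(A * mat_sum n f S) $$ (i,j) = (\<Sum>k<n. A $$ (i,k) * (\<Sum>T\<in>S. f T $$ (k,j)))"
    using A i j by (simp add: scalar_prod_def lessThan_atLeast0)
  also have "\<dots> = (\<Sum>T\<in>S. \<Sum>k<n. A $$ (i,k) * f T $$ (k,j))"
    by (simp add: sum_distrib_left) (rule sum.swap)
  also have "\<dots> = mat_sum n (\<lambda>T. A * f T) S $$ (i,j)"
    using A i j by (auto simp: scalar_prod_def lessThan_atLeast0 dest!: f intro!: sum.cong)
  finally show "(A * mat_sum n f S) $$ (i,j) = mat_sum n (\<lambda>T. A * f T) S $$ (i,j)" .
qed (use A in auto)

lemma mult_mat_sum_right:
  assumes A: "A \<in> carrier_mat n n" and f: "\<And>T. T \<in> S \<Longrightarrow> f T \<in> carrier_mat n n"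
  shows "mat_sum n f S * A = mat_sum n (\<lambda>T. f T * A) S"
proof (rule eq_matI)
  fix i j assume "i < dim_row (mat_sum n (\<lambda>T. f T * A) S)" "j < dim_col (mat_sum n (\<lambda>T. f T * A) S)"
  then have i: "i < n" and j: "j < n" by auto
  have "(mat_sum n f S * A) $$ (i,j) = (\<Sum>k<n. (\<Sum>T\<in>S. f T $$ (i,k)) * A $$ (k,j))"
    using A i j by (simp add: scalar_prod_def lessThan_atLeast0)
  also have "\<dots> = (\<Sum>T\<in>S. \<Sum>k<n. f T $$ (i,k) * A $$ (k,j))"
    by (simp add: sum_distrib_right) (rule sum.swap)
  also have "\<dots> = mat_sum n (\<lambda>T. f T * A) S $$ (i,j)"
    using A i j by (auto simp: scalar_prod_def lessThan_atLeast0 dest!: f intro!: sum.cong)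
  finally show "(mat_sum n f S * A) $$ (i,j) = mat_sum n (\<lambda>T. f T * A) S $$ (i,j)" .
qed (use A in auto)

lemma mult_mat_sum_sandwich:
  assumes A: "A \<in> carrier_mat n n" and C: "C \<in> carrier_mat n n"
    and f: "\<And>T. T \<in> S \<Longrightarrow> f T \<in> carrier_mat n n"
  shows "A * mat_sum n f S * C = mat_sum n (\<lambda>T. A * f T * C) S"
  using A C f by (simp add: mult_mat_sum_left mult_mat_sum_right mult_carrier_mat)

lemma mat_adjoint_mat_sum:
  assumes "\<And>T. T \<in> S \<Longrightarrow> f T \<in> carrier_mat n n"
  shows "mat_adjoint (mat_sum n f S) = mat_sum n (\<lambda>T. mat_adjoint (f T)) S"
  using assms by (intro eq_matI) (auto simp: cnj_sum dest!: assms intro!: sum.cong)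

lemma quadratic_form_mat_sum:
  assumes v: "v \<in> carrier_vec n" and f: "\<And>T. T \<in> S \<Longrightarrow> f T \<in> carrier_mat n n"
  shows "conjugate v \<bullet> (mat_sum n f S *\<^sub>v v) = (\<Sum>T\<in>S. conjugate v \<bullet> (f T *\<^sub>v v))"
proof -
  have "conjugate v \<bullet> (mat_sum n f S *\<^sub>v v) = (\<Sum>i<n. \<Sum>j<n. \<Sum>T\<in>S. cnj (v$i) * f T $$ (i,j) * v$j)"
    using v by (simp add: scalar_prod_def lessThan_atLeast0 row_def sum_distrib_left sum_distrib_right mult_ac)
  also have "\<dots> = (\<Sum>T\<in>S. \<Sum>i<n. \<Sum>j<n. cnj (v$i) * f T $$ (i,j) * v$j)"
    by (subst sum.swap, rule sum.cong[OF refl], rule sum.swap)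
  also have "\<dots> = (\<Sum>T\<in>S. conjugate v \<bullet> (f T *\<^sub>v v))"
    using v by (auto simp: scalar_prod_def lessThan_atLeast0 row_def sum_distrib_left mult_ac dest!: f intro!: sum.cong)
  finally show ?thesis .
qed

lemma pos_def_hermitian_gram:
  assumes B: "B \<in> carrier_mat n n" and detB: "det B \<noteq> 0"
  shows "pos_def_hermitian n (mat_adjoint B * B)"
  unfolding pos_def_hermitian_def
proof (intro conjI ballI impI)
  show "mat_adjoint B * B \<in> carrier_mat n n" using B by (intro mult_carrier_mat) simp_all
  show "mat_adjoint (mat_adjoint B * B) = mat_adjoint B * B"
    using B by (simp add: mat_adjoint_mult[of _ n n _ n])
  fix v :: "complex vec" assume v: "v \<in> carrier_vec n" "v \<noteq> 0\<^sub>v n"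
  let ?u = "B *\<^sub>v v"
  have u: "?u \<in> carrier_vec n" using B v by simp
  have "?u \<noteq> 0\<^sub>v n" using B v detB det_0_iff_vec_prod_zero[OF B] by auto
  then have "0 < ?u \<bullet>c ?u" using u by simp
  moreover have "conjugate v \<bullet> ((mat_adjoint B * B) *\<^sub>v v) = ?u \<bullet>c ?u"
    using B v mat_adjoint_scalar_prod[OF B v(1) u] conjugate_vec_sprod_comm[OF u u]
    by (simp add: assoc_mult_mat_vec[of _ n n _ n])
  ultimately show "Re (conjugate v \<bullet> ((mat_adjoint B * B) *\<^sub>v v)) > 0"
    by (simp add: less_complex_def)
qed

lemma pos_def_hermitian_smult:
  assumes "pos_def_hermitian n A" "c > 0"
  shows "pos_def_hermitian n (complex_of_real c \<cdot>\<^sub>m A)"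
  using assms unfolding pos_def_hermitian_def
  by (auto simp: mat_adjoint_smult smult_mult_mat_vec[of _ n n])

lemma pos_def_hermitian_mat_sum:
  assumes S: "finite S" "S \<noteq> {}" and f: "\<And>T. T \<in> S \<Longrightarrow> pos_def_hermitian n (f T)"
  shows "pos_def_hermitian n (mat_sum n f S)"
  unfolding pos_def_hermitian_def
proof (intro conjI ballI impI)
  have fc: "f T \<in> carrier_mat n n" if "T \<in> S" for T
    using f[OF that] unfolding pos_def_hermitian_def by simp
  show "mat_sum n f S \<in> carrier_mat n n" by simp
  show "mat_adjoint (mat_sum n f S) = mat_sum n f S"
    using f unfolding pos_def_hermitian_def
    by (subst mat_adjoint_mat_sum) (auto intro: fc intro!: mat_sum_cong)
  fix v :: "complex vec" assume v: "v \<in> carrier_vec n" "v \<noteq> 0\<^sub>v n"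
  have "Re (conjugate v \<bullet> (mat_sum n f S *\<^sub>v v)) = (\<Sum>T\<in>S. Re (conjugate v \<bullet> (f T *\<^sub>v v)))"
    by (simp add: quadratic_form_mat_sum[OF v(1) fc])
  also have "\<dots> > 0"
    using S f v unfolding pos_def_hermitian_def by (intro sum_pos) auto
  finally show "Re (conjugate v \<bullet> (mat_sum n f S *\<^sub>v v)) > 0" .
qed

definition normalized_gram :: "nat \<Rightarrow> complex mat \<Rightarrow> complex mat" where
  "normalized_gram n B =
     complex_of_real (1 / (cmod (det B) powr (2 / real n))) \<cdot>\<^sub>m (mat_adjoint B * B)"

lemma power_powr_two_div:
  assumes "x > 0" "n > 0"
  shows "(x ^ n) powr (2 / real n) = (x::real) ^ 2"
proof -
  have "(x ^ n) powr (2 / real n) = x powr (real n * (2 / real n))"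
    using assms by (simp only: powr_realpow[symmetric] powr_powr)
  also have "\<dots> = x ^ 2" using assms by (simp add: powr_realpow)
  finally show ?thesis .
qed

lemma normalized_gram_smult:
  assumes B: "B \<in> carrier_mat n n" and c: "c \<noteq> 0" and n: "n > 0"
  shows "normalized_gram n (c \<cdot>\<^sub>m B) = normalized_gram n B"
proof -
  define p where "p = cmod (det B) powr (2 / real n)"
  have "cmod (det (c \<cdot>\<^sub>m B)) powr (2 / real n) = cmod c ^ 2 * p"
    using B c n by (simp add: p_def det_smult norm_mult norm_power powr_mult power_powr_two_div)
  moreover have "1 / (cmod c ^ 2 * p) * cmod c ^ 2 = 1 / p"
    using c by simp
  ultimately show ?thesis
    unfolding normalized_gram_def p_def[symmetric] using B
    by (simp only: mat_adjoint_smult_gram smult_smult_mat flip: of_real_mult)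
qed

lemma normalized_gram_mult_unimodular:
  assumes B: "B \<in> carrier_mat n n" and C: "C \<in> carrier_mat n n" and detC: "cmod (det C) = 1"
  shows "normalized_gram n (B * C) = mat_adjoint C * normalized_gram n B * C"
proof -
  define k where "k = complex_of_real (1 / (cmod (det B) powr (2 / real n)))"
  have "cmod (det (B * C)) = cmod (det B)"
    using B C detC by (simp add: det_mult norm_mult)
  moreover have "mat_adjoint (B * C) * (B * C) = mat_adjoint C * (mat_adjoint B * B) * C"
    using B C by (simp add: mat_adjoint_mult[of _ n n _ n] assoc_mult_mat[of _ n n _ n _ n]
        mult_carrier_mat[of _ n n _ n])
  ultimately have "normalized_gram n (B * C) = k \<cdot>\<^sub>m (mat_adjoint C * (mat_adjoint B * B) * C)"
    unfolding normalized_gram_def k_def by simp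
  also have "\<dots> = mat_adjoint C * (k \<cdot>\<^sub>m (mat_adjoint B * B)) * C"
    using B C by (intro mult_smult_mat_sandwich[symmetric] mult_carrier_mat) simp_all
  finally show ?thesis unfolding normalized_gram_def k_def .
qed

lemma pos_def_hermitian_normalized_gram:
  assumes "B \<in> carrier_mat n n" "det B \<noteq> 0"
  shows "pos_def_hermitian n (normalized_gram n B)"
  unfolding normalized_gram_def
  using assms by (intro pos_def_hermitian_smult pos_def_hermitian_gram) simp_all

lemma normalized_gram_carrier:
  "B \<in> carrier_mat n n \<Longrightarrow> normalized_gram n B \<in> carrier_mat n n"
  unfolding normalized_gram_def by (intro smult_carrier_mat mult_carrier_mat) simp_all

lemma invariant_underI:
  assumes A: "A \<in> carrier_mat n n"
    and H: "\<And>h. h \<in> H \<Longrightarrow> h \<in> carrier_mat n n \<and> mat_adjoint h * A * h = A"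
  shows "invariant_under n H A"
  unfolding invariant_under_def
proof (intro ballI allI impI)
  fix h g assume h: "h \<in> H" and g: "g \<in> carrier_mat n n" and hg: "h * g = 1\<^sub>m n"
  have hc: "h \<in> carrier_mat n n" using H[OF h] by simp
  have "mat_adjoint g * A * g = mat_adjoint g * (mat_adjoint h * A * h) * g"
    using H[OF h] by simp
  also have "\<dots> = mat_adjoint (h * g) * A * (h * g)"
    using A g hc by (simp add: mat_adjoint_mult[of _ n n _ n] assoc_mult_mat[of _ n n _ n _ n]
        mult_carrier_mat[of _ n n _ n])
  also have "\<dots> = A" using A hg by simp
  finally show "mat_adjoint g * A * g = A" .
qed

lemma normalized_gram_conj_lift:
  assumes lift: "proj_lift_of_hom G n M" and n: "n > 0"
    and T: "T \<in> carrier G" and U: "U \<in> carrier G" and TU: "T \<otimes>\<^bsub>G\<^esub> U \<in> carrier G"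
    and c: "c \<noteq> 0" and h: "h = c \<cdot>\<^sub>m M U" and deth: "det h = 1"
  shows "mat_adjoint h * normalized_gram n (M T) * h = normalized_gram n (M (T \<otimes>\<^bsub>G\<^esub> U))"
proof -
  have MT: "M T \<in> carrier_mat n n" and MU: "M U \<in> carrier_mat n n"
    and MTU: "M (T \<otimes>\<^bsub>G\<^esub> U) \<in> carrier_mat n n"
    using lift T U TU unfolding proj_lift_of_hom_def GL_def by auto
  obtain e where e: "e \<noteq> 0" and Me: "M (T \<otimes>\<^bsub>G\<^esub> U) = e \<cdot>\<^sub>m (M T * M U)"
    using lift T U unfolding proj_lift_of_hom_def proj_eq_def by blast
  have "M T * h = (c / e) \<cdot>\<^sub>m M (T \<otimes>\<^bsub>G\<^esub> U)"
    using MT MU e by (simp add: h Me mult_smult_distrib[of _ n n] smult_smult_mat)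
  moreover have "h \<in> carrier_mat n n" using MU h by simp
  ultimately have "mat_adjoint h * normalized_gram n (M T) * h
      = normalized_gram n ((c / e) \<cdot>\<^sub>m M (T \<otimes>\<^bsub>G\<^esub> U))"
    using normalized_gram_mult_unimodular[OF MT, of h] deth by simp
  also have "\<dots> = normalized_gram n (M (T \<otimes>\<^bsub>G\<^esub> U))"
    using MTU c e n by (simp add: normalized_gram_smult)
  finally show ?thesis .
qed

lemma invariant_under_heisenberg_normalized_gram_sum:
  assumes G: "group G" and lift: "proj_lift_of_hom G n M" and n: "n > 0"
  shows "invariant_under n (heisenberg G n M)
           (mat_sum n (\<lambda>T. normalized_gram n (M T)) (carrier G))"
proof (rule invariant_underI[OF mat_sum_carrier])
  interpret group G by (fact G)
  have NG: "normalized_gram n (M T) \<in> carrier_mat n n" if "T \<in> carrier G" for T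
    using lift that unfolding proj_lift_of_hom_def GL_def by (simp add: normalized_gram_carrier)
  fix h assume "h \<in> heisenberg G n M"
  then obtain U c where U: "U \<in> carrier G" and c: "c \<noteq> 0" and h: "h = c \<cdot>\<^sub>m M U"
    and hc: "h \<in> carrier_mat n n" and deth: "det h = 1"
    unfolding heisenberg_def SL_def proj_eq_def by auto
  have bij: "bij_betw (\<lambda>T. T \<otimes>\<^bsub>G\<^esub> U) (carrier G) (carrier G)"
    by (rule bij_betw_byWitness[where f' = "\<lambda>T. T \<otimes>\<^bsub>G\<^esub> inv\<^bsub>G\<^esub> U"]) (use U in \<open>auto simp: m_assoc\<close>)
  have "mat_adjoint h * mat_sum n (\<lambda>T. normalized_gram n (M T)) (carrier G) * h
      = mat_sum n (\<lambda>T. mat_adjoint h * normalized_gram n (M T) * h) (carrier G)"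
    using hc NG by (simp add: mult_mat_sum_sandwich)
  also have "\<dots> = mat_sum n (\<lambda>T. normalized_gram n (M (T \<otimes>\<^bsub>G\<^esub> U))) (carrier G)"
    using lift n U c h deth by (intro mat_sum_cong normalized_gram_conj_lift) auto
  also have "\<dots> = mat_sum n (\<lambda>T. normalized_gram n (M T)) (carrier G)"
    by (rule mat_sum_reindex_bij_betw[OF bij])
  finally show "h \<in> carrier_mat n n \<and>
      mat_adjoint h * mat_sum n (\<lambda>T. normalized_gram n (M T)) (carrier G) * h
      = mat_sum n (\<lambda>T. normalized_gram n (M T)) (carrier G)"
    using hc by simp
qed

theorem corollary6p3:
  fixes G :: "('g, 'b) monoid_scheme" and n :: nat
    and M :: "'g \<Rightarrow> complex mat" and \<Phi> :: "complex mat"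
  assumes "n \<ge> 2"
    and "comm_group G" and "finite (carrier G)" and "card (carrier G) = n ^ 2"
    and "proj_lift_of_hom G n M"
    and unique: "\<And>A B. is_reduction_covariant G n M A \<Longrightarrow> is_reduction_covariant G n M B \<Longrightarrow>
                   \<exists>c::real. c > 0 \<and> A = complex_of_real c \<cdot>\<^sub>m B"
    and "is_reduction_covariant G n M \<Phi>"
  shows "\<exists>c::real. c > 0 \<and>
    \<Phi> = complex_of_real c \<cdot>\<^sub>m
      mat_sum n (\<lambda>T. complex_of_real (1 / (cmod (det (M T)) powr (2 / real n)))
                       \<cdot>\<^sub>m (mat_adjoint (M T) * M T)) (carrier G)"
proof -
  define S where "S = mat_sum n (\<lambda>T. normalized_gram n (M T)) (carrier G)"
  have G: "group G" using \<open>comm_group G\<close> by (simp add: comm_group_def)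
  have n: "n > 0" using \<open>n \<ge> 2\<close> by simp
  have "pos_def_hermitian n S"
    unfolding S_def using \<open>finite (carrier G)\<close> group.subgroup_self[OF G] \<open>proj_lift_of_hom G n M\<close>
    by (intro pos_def_hermitian_mat_sum pos_def_hermitian_normalized_gram)
       (auto simp: subgroup_def proj_lift_of_hom_def GL_def)
  moreover have "invariant_under n (heisenberg G n M) S"
    unfolding S_def using G \<open>proj_lift_of_hom G n M\<close> n
    by (rule invariant_under_heisenberg_normalized_gram_sum)
  ultimately have "is_reduction_covariant G n M S"
    by (simp add: is_reduction_covariant_def)
  then obtain c where "c > 0" "\<Phi> = complex_of_real c \<cdot>\<^sub>m S"
    using unique \<open>is_reduction_covariant G n M \<Phi>\<close> by blast
  then show ?thesis unfolding S_def normalized_gram_def by blast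
qed

end
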